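(* Assume $\mathbb E[\xi^2+\xi^{-1}+\nu^3]<\infty$ and $p_1\,m\ge1$. Then $$\liminf_{n\to\infty}\frac{\mathbb E[R_n]}{n}=\infty.$$
   Context: Let $\mathbf p=(p_k)_{k\ge0}$ be a probability distribution on the nonnegative integers with $p_0=0$ and finite mean $m=\sum_k kp_k>1$. Let $\mathbb T$ be a Galton–Watson tree with offspring distribution $\mathbf p$, rooted at $\varnothing$, and $\nu$ the number of children of the root. For a vertex $x$, $|x|$ is its depth and $\overleftarrow{x}$ its parent; $\mathbb T_n=\{x\in\mathbb T:|x|=n\}$; the edge $e=\{\overleftarrow x,x\}$ has depth $d(e)=|x|$. Let $\xi$ be a strictly positive random variable; conditionally on $\mathbb T$, $\{\xi(e)\}$ are i.i.d. copies of $\xi$ and edge $e$ gets resistance $r(e)=m^{d(e)}\xi(e)$. $C_n$ is the effective conductance between $\varnothing$ and $\mathbb T_n$ and $R_n=1/C_n$ the effective resistance. *)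

theory Defs
  imports "HOL-Probability.Probability"
begin

text \<open>Vertices of the Galton-Watson tree are Ulam-Harris words, stored reversed:
  the word \<open>i # x\<close> is the \<open>i\<close>-th child (0-based) of \<open>x\<close>; the root is \<open>[]\<close>,
  the parent of a non-root vertex \<open>x\<close> is \<open>tl x\<close>, its depth is \<open>length x\<close>.
  \<open>N x\<close> is the number of children of vertex \<open>x\<close>.  The edge between \<open>tl x\<close> and \<open>x\<close>
  is identified with the vertex \<open>x \<noteq> []\<close>; its depth is \<open>length x\<close> and it carries
  the weight \<open>\<xi> x\<close>.\<close>

fun in_tree :: "(nat list \<Rightarrow> nat) \<Rightarrow> nat list \<Rightarrow> bool" where
  "in_tree N [] = True"
| "in_tree N (i # x) = (in_tree N x \<and> i < N x)"

definition tree_ball :: "(nat list \<Rightarrow> nat) \<Rightarrow> nat \<Rightarrow> nat list set" where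
  "tree_ball N n = {x. in_tree N x \<and> length x \<le> n}"

definition tree_level :: "(nat list \<Rightarrow> nat) \<Rightarrow> nat \<Rightarrow> nat list set" where
  "tree_level N n = {x. in_tree N x \<and> length x = n}"

text \<open>Effective conductance between the root and \<open>T_n\<close> (Dirichlet principle), where the
  edge ending at \<open>x\<close> has resistance \<open>m ^ length x * \<xi> x\<close>. Values in \<open>[0,\<infinity>]\<close>
  (for \<open>n = 0\<close> the constraint set is empty, so \<open>C_0 = \<infinity>\<close>).\<close>
definition eff_conductance ::
  "real \<Rightarrow> (nat list \<Rightarrow> nat) \<Rightarrow> (nat list \<Rightarrow> real) \<Rightarrow> nat \<Rightarrow> ennreal" where
  "eff_conductance m N \<xi> n =
     (INF f \<in> {f :: nat list \<Rightarrow> real. f [] = 1 \<and> (\<forall>x \<in> tree_level N n. f x = 0)}.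
        \<Sum>x \<in> tree_ball N n - {[]}. ennreal ((f x - f (tl x))\<^sup>2 / (m ^ length x * \<xi> x)))"

definition eff_resistance ::
  "real \<Rightarrow> (nat list \<Rightarrow> nat) \<Rightarrow> (nat list \<Rightarrow> real) \<Rightarrow> nat \<Rightarrow> ennreal" where
  "eff_resistance m N \<xi> n = 1 / eff_conductance m N \<xi> n"

definition gw_space :: "nat pmf \<Rightarrow> real measure \<Rightarrow>
    ((nat list \<Rightarrow> nat) \<times> (nat list \<Rightarrow> real)) measure" where
  "gw_space p Q = (\<Pi>\<^sub>M x \<in> UNIV. measure_pmf p) \<Otimes>\<^sub>M (\<Pi>\<^sub>M x \<in> UNIV. Q)"

end

theory Submission
  imports Defs
begin

text \<open>Let \<open>B\<^sub>j\<close> be the event that the first \<open>j\<close> vertices of the leftmost path have exactly one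
  child and the \<open>j\<close>-th does not; it has probability \<open>p\<^sub>1\<^sup>j (1 - p\<^sub>1)\<close>. On \<open>B\<^sub>j\<close>, the unit
  potential that is constant down to depth \<open>j\<close> and then decreases linearly to \<open>0\<close> at depth \<open>n\<close>
  shows \<open>C\<^sub>n \<le> H\<^sub>j\<close>, its energy. Since \<open>1/C \<ge> 2t - t\<^sup>2H\<close> whenever \<open>C \<le> H\<close> and \<open>t \<ge> 0\<close>, and
  the events \<open>B\<^sub>j\<close> are disjoint, \<open>R\<^sub>n \<ge> \<Sum>\<^sub>j<\<^sub>n (2t\<^sub>j - t\<^sub>j\<^sup>2 H\<^sub>j) 1(B\<^sub>j)\<close>. On \<open>B\<^sub>j\<close> the expected
  number of vertices at depth \<open>k > j\<close> is at most \<open>p\<^sub>1\<^sup>j m\<^sup>k\<^sup>-\<^sup>j\<close>, whence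
  \<open>E[H\<^sub>j 1(B\<^sub>j)] \<le> E[1/\<xi>] p\<^sub>1\<^sup>j / ((n - j) m\<^sup>j)\<close>. With the optimal \<open>t\<^sub>j\<close> the \<open>j\<close>-th term contributes
  \<open>(p\<^sub>1 m)\<^sup>j (1 - p\<^sub>1)\<^sup>2 (n - j) / E[1/\<xi>] \<ge> (1 - p\<^sub>1)\<^sup>2 (n - j) / E[1/\<xi>]\<close>, so \<open>E[R\<^sub>n]\<close> grows
  quadratically in \<open>n\<close>.\<close>

section \<open>Words and trees\<close>

lemma in_tree_drop: "in_tree N x \<Longrightarrow> in_tree N (drop l x)"
proof (induction x arbitrary: l)
  case (Cons a x)
  then show ?case by (cases l) auto
qed simp

lemma in_tree_nth: "in_tree N x \<Longrightarrow> l < length x \<Longrightarrow> x ! l < N (drop (Suc l) x)"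
proof (induction x arbitrary: l)
  case (Cons a x)
  then show ?case by (cases l) auto
qed simp

definition spine :: "nat \<Rightarrow> nat list" where
  "spine i = replicate i 0"

lemma inj_spine: "inj spine"
  by (simp add: inj_def spine_def)

lemma length_spine [simp]: "length (spine i) = i"
  by (simp add: spine_def)

lemma in_tree_eq_spine:
  assumes "\<forall>i<j. N (spine i) = 1" "in_tree N x" "length x \<le> j"
  shows "x = spine (length x)"
  using assms(2,3)
proof (induction x)
  case (Cons a x)
  then have x: "x = spine (length x)" by simp
  with Cons.prems assms(1) have "a < 1" by (metis Suc_le_lessD in_tree.simps(2) length_Cons)
  with x show ?case by (simp add: spine_def)
qed (simp add: spine_def)

lemma in_tree_spine_suffix:
  assumes "\<forall>i<j. N (spine i) = 1" "in_tree N x" "j \<le> length x"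
  shows "drop (length x - j) x = spine j"
  using in_tree_eq_spine[OF assms(1) in_tree_drop[OF assms(2)]] assms(3) by simp

definition words_upto :: "nat \<Rightarrow> nat \<Rightarrow> nat list set" where
  "words_upto n K = {x. set x \<subseteq> {..<K} \<and> length x \<le> n}"

lemma finite_words_upto: "finite (words_upto n K)"
  unfolding words_upto_def by (rule finite_lists_length_le) simp

lemma words_upto_mono: "K \<le> K' \<Longrightarrow> words_upto n K \<subseteq> words_upto n K'"
  unfolding words_upto_def by auto

lemma tree_ball_subset_words_upto: "\<exists>K. tree_ball N n \<subseteq> words_upto n K"
proof (induction n)
  case 0
  then show ?case by (auto simp: tree_ball_def words_upto_def)
next
  case (Suc n)
  then obtain K where K: "tree_ball N n \<subseteq> words_upto n K" by blast
  define K' where "K' = K + (\<Sum>y\<in>words_upto n K. N y)"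
  have Cons_in: "i # y \<in> words_upto (Suc n) K'" if "i # y \<in> tree_ball N (Suc n)" for i y
  proof -
    from that K have y: "y \<in> words_upto n K" and "i < N y" by (auto simp: tree_ball_def)
    moreover have "N y \<le> (\<Sum>y\<in>words_upto n K. N y)"
      using y finite_words_upto by (intro member_le_sum) simp_all
    ultimately show ?thesis by (auto simp: words_upto_def K'_def)
  qed
  have "x \<in> words_upto (Suc n) K'" if "x \<in> tree_ball N (Suc n)" for x
    using that Cons_in by (cases x) (auto simp: words_upto_def)
  then show ?case by blast
qed

lemma sum_lists_length_eq_prod:
  fixes f :: "'a \<Rightarrow> 'b::comm_semiring_1"
  shows "(\<Sum>xs\<in>{xs. set xs \<subseteq> A \<and> length xs = d}. \<Prod>l<d. f (xs ! l)) = sum f A ^ d"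
proof (induction d)
  case 0
  have "{xs. set xs \<subseteq> A \<and> length xs = 0} = {[]}" by auto
  then show ?case by simp
next
  case (Suc d)
  let ?Y = "{xs. set xs \<subseteq> A \<and> length xs = d}"
  have "(\<Sum>xs\<in>{xs. set xs \<subseteq> A \<and> length xs = Suc d}. \<Prod>l<Suc d. f (xs ! l))
      = (\<Sum>(xs, a)\<in>?Y \<times> A. f a * (\<Prod>l<d. f (xs ! l)))"
    unfolding lists_length_Suc_eq
    by (subst sum.reindex[OF inj_split_Cons])
       (auto intro!: sum.cong simp del: prod.lessThan_Suc simp: prod.lessThan_Suc_shift)
  also have "\<dots> = (\<Sum>xs\<in>?Y. \<Prod>l<d. f (xs ! l)) * sum f A"
    by (simp add: sum.cartesian_product[symmetric] sum_product mult.commute sum.swap[of _ A])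
  finally show ?case using Suc by (simp add: mult.commute)
qed

section \<open>The linear test potential\<close>

definition linear_potential :: "nat \<Rightarrow> nat \<Rightarrow> nat list \<Rightarrow> real" where
  "linear_potential n j x =
     (if length x \<le> j then 1 else (real n - real (length x)) / (real n - real j))"

lemma linear_potential_step:
  assumes "j < n" "j < length x"
  shows "linear_potential n j x - linear_potential n j (tl x) = - 1 / (real n - real j)"
proof (cases "length x = Suc j")
  case True
  with assms show ?thesis by (simp add: linear_potential_def field_simps)
next
  case False
  with assms(2) have "\<not> length (tl x) \<le> j" by simp
  with assms(2) show ?thesis
    by (simp add: linear_potential_def of_nat_diff diff_divide_distrib[symmetric])
qed

text \<open>Bounds the energy of \<open>linear_potential n j\<close> on the edge ending at \<open>x\<close>; it vanishes off
  the tree, so that it can be summed over a fixed set of words.\<close>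

definition deep_energy ::
    "real \<Rightarrow> nat \<Rightarrow> nat \<Rightarrow> (nat list \<Rightarrow> nat) \<Rightarrow> (nat list \<Rightarrow> real) \<Rightarrow> nat list \<Rightarrow> ennreal" where
  "deep_energy m n j N \<xi> x =
     (if in_tree N x \<and> j < length x then ennreal (1 / ((real n - real j)\<^sup>2 * m ^ length x)) else 0)
       * ennreal (1 / \<xi> x)"

lemma linear_potential_energy_le:
  assumes "j < n" "m > 0" "in_tree N x"
  shows "ennreal ((linear_potential n j x - linear_potential n j (tl x))\<^sup>2 / (m ^ length x * \<xi> x))
           \<le> deep_energy m n j N \<xi> x"
proof (cases "j < length x \<and> \<xi> x > 0")
  case True
  then have "(linear_potential n j x - linear_potential n j (tl x))\<^sup>2 / (m ^ length x * \<xi> x)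
      = 1 / ((real n - real j)\<^sup>2 * m ^ length x) * (1 / \<xi> x)"
    using assms by (simp add: linear_potential_step power2_eq_square field_simps)
  with True assms show ?thesis by (simp add: deep_energy_def ennreal_mult[symmetric])
next
  case False
  then consider "\<not> j < length x" | "\<xi> x \<le> 0" by linarith
  then show ?thesis
  proof cases
    case 1
    then have "length (tl x) \<le> j" by simp
    with 1 show ?thesis by (simp add: linear_potential_def)
  next
    case 2
    with assms(2) have "(linear_potential n j x - linear_potential n j (tl x))\<^sup>2 / (m ^ length x * \<xi> x) \<le> 0"
      by (intro divide_nonneg_nonpos mult_nonneg_nonpos) auto
    then show ?thesis by (simp add: ennreal_neg)
  qed
qed

lemma eff_conductance_le_deep_energy:
  assumes "j < n" "m > 0" "tree_ball N n \<subseteq> words_upto n K"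
  shows "eff_conductance m N \<xi> n \<le> (\<Sum>x\<in>words_upto n K. deep_energy m n j N \<xi> x)"
proof -
  let ?f = "linear_potential n j"
  have "eff_conductance m N \<xi> n
      \<le> (\<Sum>x \<in> tree_ball N n - {[]}. ennreal ((?f x - ?f (tl x))\<^sup>2 / (m ^ length x * \<xi> x)))"
    unfolding eff_conductance_def
    by (rule INF_lower) (use assms(1) in \<open>auto simp: linear_potential_def tree_level_def\<close>)
  also have "\<dots> \<le> (\<Sum>x \<in> tree_ball N n - {[]}. deep_energy m n j N \<xi> x)"
    by (intro sum_mono linear_potential_energy_le assms(1,2)) (simp add: tree_ball_def)
  also have "\<dots> \<le> (\<Sum>x\<in>words_upto n K. deep_energy m n j N \<xi> x)"
    using assms(3) by (intro sum_mono2 finite_words_upto) auto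
  finally show ?thesis .
qed

lemma tangent_le_inverse:
  fixes C H :: ennreal and t :: real
  assumes "C \<le> H" "t \<ge> 0"
  shows "ennreal (2 * t) - ennreal (t\<^sup>2) * H \<le> 1 / C"
proof (cases "C = 0 \<or> H = \<infinity> \<or> t = 0")
  case True
  then show ?thesis using assms(2) by (auto simp: ennreal_mult_top)
next
  case False
  then obtain c h where ch: "C = ennreal c" "H = ennreal h" "0 < c" "c \<le> h"
    using assms(1) by (cases C; cases H) (auto simp: top_unique)
  have "0 \<le> (1 - t * h)\<^sup>2 / h" using ch by simp
  also have "\<dots> = 1 / h + t\<^sup>2 * h - 2 * t" using ch by (simp add: power2_eq_square field_simps)
  finally have "2 * t - t\<^sup>2 * h \<le> 1 / c" using ch frac_le[of 1 1 c h] by linarith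
  then have "ennreal (2 * t - t\<^sup>2 * h) \<le> ennreal (1 / c)" by (rule ennreal_leI)
  then show ?thesis
    using ch assms(2) divide_ennreal[of 1 c] by (simp add: ennreal_mult[symmetric] ennreal_minus)
qed

section \<open>Offspring probabilities along the leftmost path\<close>

abbreviation offspring_space :: "nat pmf \<Rightarrow> (nat list \<Rightarrow> nat) measure" where
  "offspring_space p \<equiv> PiM UNIV (\<lambda>_. measure_pmf p)"

lemma product_prob_space_offspring: "product_prob_space (\<lambda>_::nat list. measure_pmf p)"
  by unfold_locales simp

lemma space_offspring_space [simp]: "space (offspring_space p) = UNIV"
  by (simp add: space_PiM)

lemma measurable_offspring_component [measurable]:
  "(\<lambda>N. N x) \<in> measurable (offspring_space p) (count_space UNIV)"
  using measurable_component_singleton[of x UNIV "\<lambda>_. measure_pmf p"] by simp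

lemma measurable_in_tree [measurable]: "Measurable.pred (offspring_space p) (\<lambda>N. in_tree N x)"
  by (induction x) simp_all

lemma emeasure_offspring_cylinder:
  assumes "finite J"
  shows "emeasure (offspring_space p) {N. \<forall>c\<in>J. N c \<in> X c} = (\<Prod>c\<in>J. emeasure (measure_pmf p) (X c))"
proof -
  interpret product_prob_space "\<lambda>_::nat list. measure_pmf p" UNIV
    by (rule product_prob_space_offspring)
  show ?thesis using emeasure_PiM_Collect[of J X] assms by simp
qed

lemma sets_offspring_cylinder [measurable]:
  assumes "finite J"
  shows "{N. \<forall>c\<in>J. N c \<in> X c} \<in> sets (offspring_space p)"
proof -
  have "{N. N c \<in> X c} \<in> sets (offspring_space p)" for c
    using measurable_sets[OF measurable_offspring_component[of c p], of "X c"] by (simp add: vimage_def)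
  then show ?thesis
    using sets.sets_Collect_finite_All[where S = J and P = "\<lambda>c N. N c \<in> X c" and M = "offspring_space p"]
      assms by simp
qed

lemma prod_spine_image: "(\<Prod>c\<in>spine ` A. g c) = (\<Prod>i\<in>A. g (spine i))"
  using prod.reindex[OF inj_on_subset[OF inj_spine subset_UNIV], of g A] by (simp add: comp_def)

definition spine_exit :: "nat \<Rightarrow> (nat list \<Rightarrow> nat) set" where
  "spine_exit j = {N. (\<forall>i<j. N (spine i) = 1) \<and> N (spine j) \<noteq> 1}"

lemma spine_exit_disjoint: "i \<noteq> j \<Longrightarrow> N \<in> spine_exit i \<Longrightarrow> N \<notin> spine_exit j"
  by (cases i j rule: linorder_cases) (auto simp: spine_exit_def)

lemma sets_spine_exit [measurable]: "spine_exit j \<in> sets (offspring_space p)"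
proof -
  have "spine_exit j = {N \<in> space (offspring_space p). (\<forall>i<j. N (spine i) = 1) \<and> N (spine j) \<noteq> 1}"
    by (simp add: spine_exit_def)
  also have "\<dots> \<in> sets (offspring_space p)" by measurable
  finally show ?thesis .
qed

lemma emeasure_spine_exit:
  "emeasure (offspring_space p) (spine_exit j) = ennreal (pmf p 1) ^ j * ennreal (1 - pmf p 1)"
proof -
  define X where "X c = (if length c < j then {1} else - {1::nat})" for c :: "nat list"
  have "spine_exit j = {N. \<forall>c\<in>spine ` insert j {..<j}. N c \<in> X c}"
    by (auto simp: spine_exit_def X_def)
  then have "emeasure (offspring_space p) (spine_exit j)
      = (\<Prod>c\<in>spine ` insert j {..<j}. emeasure (measure_pmf p) (X c))"
    by (simp only: emeasure_offspring_cylinder finite_imageI finite_insert finite_lessThan)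
  also have "\<dots> = emeasure (measure_pmf p) (X (spine j)) * (\<Prod>i<j. emeasure (measure_pmf p) (X (spine i)))"
    by (subst prod_spine_image) simp
  also have "\<dots> = ennreal (pmf p 1) ^ j * ennreal (1 - pmf p 1)"
    using measure_pmf.prob_compl[of "{1}" p]
    by (simp add: X_def emeasure_pmf_single measure_pmf.emeasure_eq_measure measure_pmf_single
        Compl_eq_Diff_UNIV mult.commute)
  finally show ?thesis .
qed

definition tail_prob :: "nat pmf \<Rightarrow> nat \<Rightarrow> ennreal" where
  "tail_prob p i = emeasure (measure_pmf p) {v. i < v}"

lemma sum_tail_prob_le_expectation:
  assumes "integrable (measure_pmf p) real"
  shows "(\<Sum>i<K. tail_prob p i) \<le> ennreal (measure_pmf.expectation p real)"
proof -
  have "(\<Sum>i<K. tail_prob p i) = (\<Sum>i<K. \<integral>\<^sup>+ v. indicator {v. i < v} v \<partial>measure_pmf p)"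
    unfolding tail_prob_def by (simp add: nn_integral_indicator)
  also have "\<dots> = (\<integral>\<^sup>+ v. (\<Sum>i<K. indicator {v. i < v} v) \<partial>measure_pmf p)"
    by (rule nn_integral_sum[symmetric]) simp
  also have "\<dots> \<le> (\<integral>\<^sup>+ v. ennreal (real v) \<partial>measure_pmf p)"
  proof (rule nn_integral_mono)
    fix v :: nat
    have "(\<Sum>i<K. indicator {v. i < v} v :: ennreal) = of_nat (min K v)"
      by (induction K) (auto simp: min_def)
    then show "(\<Sum>i<K. indicator {v. i < v} v) \<le> ennreal (real v)"
      by (simp add: ennreal_of_nat_eq_real_of_nat)
  qed
  also have "\<dots> = ennreal (measure_pmf.expectation p real)"
    using assms by (rule nn_integral_eq_integral) simp
  finally show ?thesis .
qed

text \<open>Bounds the probability that the first \<open>j\<close> vertices of the leftmost path have one child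
  and that the word \<open>x\<close> of length \<open>k \<ge> j\<close> belongs to the tree: the last \<open>j\<close> letters of \<open>x\<close> must
  be \<open>0\<close> and each of the first \<open>k - j\<close> letters \<open>x ! l\<close> must be smaller than the number of
  children of the ancestor \<open>drop (Suc l) x\<close>.\<close>

definition spine_word_bound :: "nat pmf \<Rightarrow> nat \<Rightarrow> nat list \<Rightarrow> ennreal" where
  "spine_word_bound p j x =
     (if drop (length x - j) x = spine j
      then ennreal (pmf p 1) ^ j * (\<Prod>l<length x - j. tail_prob p (x ! l)) else 0)"

lemma emeasure_spine_in_tree_le:
  assumes "j \<le> length x"
  shows "emeasure (offspring_space p) {N. (\<forall>i<j. N (spine i) = 1) \<and> in_tree N x}
           \<le> spine_word_bound p j x"
proof (cases "drop (length x - j) x = spine j")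
  case False
  with assms have "{N. (\<forall>i<j. N (spine i) = 1) \<and> in_tree N x} = {}"
    using in_tree_spine_suffix by blast
  then show ?thesis by (metis emeasure_empty zero_le)
next
  case True
  define k where "k = length x"
  define ancestor where "ancestor l = drop (Suc l) x" for l
  define X where "X c = (if length c < j then {1} else {v. x ! (k - Suc (length c)) < v})"
    for c :: "nat list"
  have length_ancestor: "length (ancestor l) = k - Suc l" for l
    by (simp add: ancestor_def k_def)
  have inj_ancestor: "inj_on ancestor {..<k - j}"
    by (rule inj_on_inverseI[of _ "\<lambda>c. k - Suc (length c)"]) (simp add: length_ancestor)
  have disjoint: "spine ` {..<j} \<inter> ancestor ` {..<k - j} = {}"
    by (auto dest!: arg_cong[of _ _ length] simp: length_ancestor)
  have "{N. (\<forall>i<j. N (spine i) = 1) \<and> in_tree N x}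
      \<subseteq> {N. \<forall>c\<in>spine ` {..<j} \<union> ancestor ` {..<k - j}. N c \<in> X c}"
    using in_tree_nth[of _ x] by (auto simp: X_def length_ancestor ancestor_def k_def)
  then have "emeasure (offspring_space p) {N. (\<forall>i<j. N (spine i) = 1) \<and> in_tree N x}
      \<le> (\<Prod>c\<in>spine ` {..<j} \<union> ancestor ` {..<k - j}. emeasure (measure_pmf p) (X c))"
    by (subst emeasure_offspring_cylinder[symmetric]) (auto intro!: emeasure_mono sets_offspring_cylinder)
  also have "\<dots> = (\<Prod>i<j. emeasure (measure_pmf p) (X (spine i)))
                    * (\<Prod>l<k - j. emeasure (measure_pmf p) (X (ancestor l)))"
    by (simp add: prod.union_disjoint[OF _ _ disjoint] prod_spine_image prod.reindex[OF inj_ancestor])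
  also have "\<dots> = spine_word_bound p j x"
  proof -
    have "(\<Prod>i<j. emeasure (measure_pmf p) (X (spine i))) = ennreal (pmf p 1) ^ j"
      by (simp add: X_def emeasure_pmf_single)
    moreover have "(\<Prod>l<k - j. emeasure (measure_pmf p) (X (ancestor l))) = (\<Prod>l<k - j. tail_prob p (x ! l))"
      by (rule prod.cong) (auto simp: X_def length_ancestor tail_prob_def)
    ultimately show ?thesis using True by (simp add: spine_word_bound_def k_def)
  qed
  finally show ?thesis .
qed

lemma sum_spine_word_bound_le:
  assumes "j \<le> k" "integrable (measure_pmf p) real"
  shows "(\<Sum>x\<in>{x\<in>words_upto n K. length x = k}. spine_word_bound p j x)
           \<le> ennreal (pmf p 1) ^ j * ennreal (measure_pmf.expectation p real) ^ (k - j)"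
proof -
  let ?S = "{x\<in>words_upto n K. length x = k}"
  let ?Y = "{y. set y \<subseteq> {..<K} \<and> length y = k - j}"
  have "(\<Sum>x\<in>?S. spine_word_bound p j x) = (\<Sum>x\<in>{x\<in>?S. drop (k - j) x = spine j}. spine_word_bound p j x)"
    by (rule sum.mono_neutral_right) (auto simp: finite_words_upto spine_word_bound_def)
  also have "\<dots> \<le> (\<Sum>x\<in>(\<lambda>y. y @ spine j) ` ?Y. spine_word_bound p j x)"
  proof (rule sum_mono2)
    show "{x\<in>?S. drop (k - j) x = spine j} \<subseteq> (\<lambda>y. y @ spine j) ` ?Y"
    proof
      fix x assume x: "x \<in> {x\<in>?S. drop (k - j) x = spine j}"
      then have "x = take (k - j) x @ spine j" by (metis (mono_tags) append_take_drop_id mem_Collect_eq)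
      moreover have "take (k - j) x \<in> ?Y"
        using x assms(1) by (auto simp: words_upto_def dest: in_set_takeD)
      ultimately show "x \<in> (\<lambda>y. y @ spine j) ` ?Y" by blast
    qed
  qed (simp_all add: finite_lists_length_eq)
  also have "\<dots> = (\<Sum>y\<in>?Y. ennreal (pmf p 1) ^ j * (\<Prod>l<k - j. tail_prob p (y ! l)))"
    by (subst sum.reindex) (auto simp: inj_on_def spine_word_bound_def nth_append intro!: sum.cong prod.cong)
  also have "\<dots> = ennreal (pmf p 1) ^ j * (\<Sum>i<K. tail_prob p i) ^ (k - j)"
    by (simp add: sum_distrib_left[symmetric] sum_lists_length_eq_prod)
  also have "\<dots> \<le> ennreal (pmf p 1) ^ j * ennreal (measure_pmf.expectation p real) ^ (k - j)"
    by (intro mult_left_mono power_mono sum_tail_prob_le_expectation assms(2)) auto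
  finally show ?thesis .
qed

section \<open>Expected energy and expected resistance\<close>

lemma sum_diff_lessThan_real: "2 * (\<Sum>j<n. real (n - j)) = real n * (real n + 1)"
proof (induction n)
  case (Suc n)
  have "(\<Sum>j<n. real (Suc n - j)) = (\<Sum>j<n. real (n - j) + 1)"
    by (intro sum.cong) (auto simp: Suc_diff_le)
  then have "(\<Sum>j<Suc n. real (Suc n - j)) = (\<Sum>j<n. real (n - j)) + real n + 1"
    by (simp add: sum.distrib)
  with Suc show ?case by (simp add: algebra_simps)
qed simp

locale gw_model =
  fixes p :: "nat pmf" and Q :: "real measure" and m e :: real
  assumes prob_space_Q: "prob_space Q" and sets_Q: "sets Q = sets borel"
    and integrable_mean: "integrable (measure_pmf p) real"
    and m_eq: "m = measure_pmf.expectation p real" and m_pos: "m > 0"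
    and inverse_moment: "(\<integral>\<^sup>+ x. ennreal (1 / x) \<partial>Q) = ennreal e" and e_nonneg: "e \<ge> 0"
begin

abbreviation weight_space :: "(nat list \<Rightarrow> real) measure" where
  "weight_space \<equiv> PiM UNIV (\<lambda>_. Q)"

abbreviation gw :: "((nat list \<Rightarrow> nat) \<times> (nat list \<Rightarrow> real)) measure" where
  "gw \<equiv> offspring_space p \<Otimes>\<^sub>M weight_space"

lemma product_prob_space_weight: "product_prob_space (\<lambda>_::nat list. Q)"
  unfolding product_prob_space_def product_prob_space_axioms_def product_sigma_finite_def
  using prob_space_Q by (simp add: prob_space_imp_sigma_finite)

lemma measurable_weight_component [measurable]: "(\<lambda>\<xi>. \<xi> x) \<in> borel_measurable weight_space"
  using measurable_component_singleton[of x UNIV "\<lambda>_. Q"] by (simp add: measurable_cong_sets[OF refl sets_Q])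

lemma nn_integral_inverse_weight: "(\<integral>\<^sup>+ \<xi>. ennreal (1 / \<xi> x) \<partial>weight_space) = ennreal e"
proof -
  interpret product_prob_space "\<lambda>_::nat list. Q" UNIV by (rule product_prob_space_weight)
  have "(\<lambda>y. ennreal (1 / y)) \<in> borel_measurable Q"
    by (subst measurable_cong_sets[OF sets_Q refl]) measurable
  then have "(\<integral>\<^sup>+ \<xi>. ennreal (1 / \<xi> x) \<partial>weight_space) = (\<integral>\<^sup>+ y. ennreal (1 / y) \<partial>distr weight_space Q (\<lambda>\<xi>. \<xi> x))"
    by (intro nn_integral_distr[symmetric] measurable_component_singleton) simp_all
  then show ?thesis by (simp add: PiM_component inverse_moment)
qed

lemma nn_integral_gw_product:
  assumes [measurable]: "a \<in> borel_measurable (offspring_space p)" "b \<in> borel_measurable weight_space"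
  shows "(\<integral>\<^sup>+ \<omega>. a (fst \<omega>) * b (snd \<omega>) \<partial>gw)
           = (\<integral>\<^sup>+ N. a N \<partial>offspring_space p) * (\<integral>\<^sup>+ \<xi>. b \<xi> \<partial>weight_space)"
proof -
  interpret W: prob_space weight_space by (rule prob_space_PiM) (rule prob_space_Q)
  have "(\<integral>\<^sup>+ \<omega>. a (fst \<omega>) * b (snd \<omega>) \<partial>gw) = (\<integral>\<^sup>+ N. \<integral>\<^sup>+ \<xi>. a N * b \<xi> \<partial>weight_space \<partial>offspring_space p)"
    by (rule W.nn_integral_fst[symmetric, where f = "\<lambda>\<omega>. a (fst \<omega>) * b (snd \<omega>)", simplified]) measurable
  also have "\<dots> = (\<integral>\<^sup>+ N. a N * (\<integral>\<^sup>+ \<xi>. b \<xi> \<partial>weight_space) \<partial>offspring_space p)"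
    by (rule nn_integral_cong) (rule nn_integral_cmult, measurable)
  also have "\<dots> = (\<integral>\<^sup>+ N. a N \<partial>offspring_space p) * (\<integral>\<^sup>+ \<xi>. b \<xi> \<partial>weight_space)"
    by (rule nn_integral_multc) measurable
  finally show ?thesis .
qed

lemma measurable_exit_deep_energy [measurable]:
  "(\<lambda>\<omega>. indicator (spine_exit j) (fst \<omega>) * deep_energy m n j (fst \<omega>) (snd \<omega>) x) \<in> borel_measurable gw"
  unfolding deep_energy_def by measurable

lemma nn_integral_exit_deep_energy_le:
  assumes "j < length x"
  shows "(\<integral>\<^sup>+ \<omega>. indicator (spine_exit j) (fst \<omega>) * deep_energy m n j (fst \<omega>) (snd \<omega>) x \<partial>gw)
           \<le> ennreal (1 / ((real n - real j)\<^sup>2 * m ^ length x)) * ennreal e * spine_word_bound p j x"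
proof -
  define c where "c = ennreal (1 / ((real n - real j)\<^sup>2 * m ^ length x))"
  define A where "A = {N. (\<forall>i<j. N (spine i) = 1) \<and> in_tree N x}"
  have "A = {N \<in> space (offspring_space p). (\<forall>i<j. N (spine i) = 1) \<and> in_tree N x}"
    by (simp add: A_def)
  also have "\<dots> \<in> sets (offspring_space p)" by measurable
  finally have [measurable]: "A \<in> sets (offspring_space p)" .
  have "(\<integral>\<^sup>+ \<omega>. indicator (spine_exit j) (fst \<omega>) * deep_energy m n j (fst \<omega>) (snd \<omega>) x \<partial>gw)
      \<le> (\<integral>\<^sup>+ \<omega>. (indicator A (fst \<omega>) * c) * ennreal (1 / snd \<omega> x) \<partial>gw)"
    using assms
    by (intro nn_integral_mono) (auto simp: deep_energy_def indicator_def spine_exit_def A_def c_def)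
  also have "\<dots> = emeasure (offspring_space p) A * c * ennreal e"
    by (subst nn_integral_gw_product) (simp_all add: nn_integral_inverse_weight nn_integral_multc)
  also have "\<dots> \<le> spine_word_bound p j x * c * ennreal e"
    unfolding A_def using assms by (intro mult_right_mono emeasure_spine_in_tree_le) auto
  finally show ?thesis by (simp add: c_def mult_ac)
qed

lemma level_exit_deep_energy_le:
  assumes "j < k"
  shows "(\<Sum>x\<in>{x\<in>words_upto n K. length x = k}.
            \<integral>\<^sup>+ \<omega>. indicator (spine_exit j) (fst \<omega>) * deep_energy m n j (fst \<omega>) (snd \<omega>) x \<partial>gw)
           \<le> ennreal (e * pmf p 1 ^ j / ((real n - real j)\<^sup>2 * m ^ j))"
proof -
  let ?c = "ennreal (1 / ((real n - real j)\<^sup>2 * m ^ k)) * ennreal e"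
  have "(\<Sum>x\<in>{x\<in>words_upto n K. length x = k}.
            \<integral>\<^sup>+ \<omega>. indicator (spine_exit j) (fst \<omega>) * deep_energy m n j (fst \<omega>) (snd \<omega>) x \<partial>gw)
      \<le> ?c * (\<Sum>x\<in>{x\<in>words_upto n K. length x = k}. spine_word_bound p j x)"
    unfolding sum_distrib_left using assms
    by (intro sum_mono) (auto intro!: order.trans[OF nn_integral_exit_deep_energy_le])
  also have "\<dots> \<le> ?c * (ennreal (pmf p 1) ^ j * ennreal m ^ (k - j))"
    using sum_spine_word_bound_le[of j k p n K] assms integrable_mean
    by (intro mult_left_mono) (simp_all add: m_eq)
  also have "\<dots> = ennreal (1 / ((real n - real j)\<^sup>2 * m ^ k) * e * (pmf p 1 ^ j * m ^ (k - j)))"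
    using m_pos e_nonneg by (simp add: ennreal_power ennreal_mult'[symmetric])
  also have "1 / ((real n - real j)\<^sup>2 * m ^ k) * e * (pmf p 1 ^ j * m ^ (k - j))
      = e * pmf p 1 ^ j / ((real n - real j)\<^sup>2 * m ^ j)"
  proof -
    have "m ^ k = m ^ j * m ^ (k - j)" using assms by (simp add: power_add[symmetric])
    then show ?thesis using m_pos by (simp add: field_simps)
  qed
  finally show ?thesis .
qed

text \<open>The energy of the linear potential is a sum over a random finite set of words;
  restricting it to the fixed finite sets \<open>words_upto n K\<close> keeps it measurable, and the
  supremum over \<open>K\<close> recovers it by \<open>tree_ball_subset_words_upto\<close>.\<close>

definition truncated_exit_energy ::
    "nat \<Rightarrow> nat \<Rightarrow> nat \<Rightarrow> (nat list \<Rightarrow> nat) \<times> (nat list \<Rightarrow> real) \<Rightarrow> ennreal" where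
  "truncated_exit_energy n j K \<omega> =
     (\<Sum>x\<in>words_upto n K. indicator (spine_exit j) (fst \<omega>) * deep_energy m n j (fst \<omega>) (snd \<omega>) x)"

definition exit_energy :: "nat \<Rightarrow> nat \<Rightarrow> (nat list \<Rightarrow> nat) \<times> (nat list \<Rightarrow> real) \<Rightarrow> ennreal" where
  "exit_energy n j \<omega> = (SUP K. truncated_exit_energy n j K \<omega>)"

lemma measurable_truncated_exit_energy [measurable]:
  "truncated_exit_energy n j K \<in> borel_measurable gw"
  unfolding truncated_exit_energy_def by measurable

lemma measurable_exit_energy [measurable]: "exit_energy n j \<in> borel_measurable gw"
  unfolding exit_energy_def by measurable

lemma nn_integral_truncated_exit_energy_le:
  assumes "j < n"
  shows "(\<integral>\<^sup>+ \<omega>. truncated_exit_energy n j K \<omega> \<partial>gw)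
           \<le> ennreal (e * pmf p 1 ^ j / ((real n - real j) * m ^ j))"
proof -
  let ?B = "ennreal (e * pmf p 1 ^ j / ((real n - real j)\<^sup>2 * m ^ j))"
  let ?I = "\<lambda>x. \<integral>\<^sup>+ \<omega>. indicator (spine_exit j) (fst \<omega>) * deep_energy m n j (fst \<omega>) (snd \<omega>) x \<partial>gw"
  have "(\<integral>\<^sup>+ \<omega>. truncated_exit_energy n j K \<omega> \<partial>gw) = (\<Sum>x\<in>words_upto n K. ?I x)"
    unfolding truncated_exit_energy_def by (rule nn_integral_sum) measurable
  also have "\<dots> = (\<Sum>k\<le>n. \<Sum>x\<in>{x\<in>words_upto n K. length x = k}. ?I x)"
    by (rule sum.group[symmetric]) (simp_all add: finite_words_upto, auto simp: words_upto_def)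
  also have "\<dots> \<le> (\<Sum>k\<le>n. if j < k then ?B else 0)"
  proof (rule sum_mono)
    fix k
    show "(\<Sum>x\<in>{x\<in>words_upto n K. length x = k}. ?I x) \<le> (if j < k then ?B else 0)"
      by (cases "j < k") (simp_all only: level_exit_deep_energy_le if_True if_False, simp add: deep_energy_def)
  qed
  also have "\<dots> = (\<Sum>k\<in>{j<..n}. ?B)"
    by (rule sum.mono_neutral_cong_right) auto
  also have "\<dots> = ennreal (real (n - j) * (e * pmf p 1 ^ j / ((real n - real j)\<^sup>2 * m ^ j)))"
    using e_nonneg m_pos by (simp add: ennreal_mult'[symmetric] ennreal_of_nat_eq_real_of_nat)
  also have "real (n - j) * (e * pmf p 1 ^ j / ((real n - real j)\<^sup>2 * m ^ j))
      = e * pmf p 1 ^ j / ((real n - real j) * m ^ j)"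
    using assms by (simp add: of_nat_diff power2_eq_square)
  finally show ?thesis .
qed

lemma nn_integral_exit_energy_le:
  assumes "j < n"
  shows "(\<integral>\<^sup>+ \<omega>. exit_energy n j \<omega> \<partial>gw) \<le> ennreal (e * pmf p 1 ^ j / ((real n - real j) * m ^ j))"
proof -
  have "incseq (\<lambda>K. truncated_exit_energy n j K)"
    by (auto simp: incseq_def le_fun_def truncated_exit_energy_def intro!: sum_mono2 finite_words_upto words_upto_mono)
  then have "(\<integral>\<^sup>+ \<omega>. exit_energy n j \<omega> \<partial>gw) = (SUP K. \<integral>\<^sup>+ \<omega>. truncated_exit_energy n j K \<omega> \<partial>gw)"
    unfolding exit_energy_def
    by (rule nn_integral_monotone_convergence_SUP) simp
  also have "\<dots> \<le> ennreal (e * pmf p 1 ^ j / ((real n - real j) * m ^ j))"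
    using assms by (intro SUP_least nn_integral_truncated_exit_energy_le)
  finally show ?thesis .
qed

lemma eff_conductance_le_exit_energy:
  assumes "j < n" "fst \<omega> \<in> spine_exit j"
  shows "eff_conductance m (fst \<omega>) (snd \<omega>) n \<le> exit_energy n j \<omega>"
proof -
  obtain K where "tree_ball (fst \<omega>) n \<subseteq> words_upto n K"
    using tree_ball_subset_words_upto by blast
  then have "eff_conductance m (fst \<omega>) (snd \<omega>) n \<le> truncated_exit_energy n j K \<omega>"
    using eff_conductance_le_deep_energy[OF assms(1) m_pos] assms(2)
    by (simp add: truncated_exit_energy_def)
  also have "\<dots> \<le> exit_energy n j \<omega>"
    unfolding exit_energy_def by (rule SUP_upper) simp
  finally show ?thesis .
qed

definition tangent_term :: "nat \<Rightarrow> real \<Rightarrow> nat \<Rightarrow> (nat list \<Rightarrow> nat) \<times> (nat list \<Rightarrow> real) \<Rightarrow> ennreal" where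
  "tangent_term n t j \<omega> = ennreal (2 * t) * indicator (spine_exit j) (fst \<omega>) - ennreal (t\<^sup>2) * exit_energy n j \<omega>"

lemma measurable_tangent_term [measurable]: "tangent_term n t j \<in> borel_measurable gw"
  unfolding tangent_term_def by measurable

lemma sum_tangent_terms_le_eff_resistance:
  assumes "\<And>j. j < n \<Longrightarrow> t j \<ge> 0"
  shows "(\<Sum>j<n. tangent_term n (t j) j \<omega>) \<le> eff_resistance m (fst \<omega>) (snd \<omega>) n"
proof (cases "\<exists>j<n. fst \<omega> \<in> spine_exit j")
  case True
  then obtain j where j: "j < n" "fst \<omega> \<in> spine_exit j" by blast
  have "tangent_term n (t i) i \<omega> = 0" if "i \<noteq> j" for i
    using spine_exit_disjoint[of j i] that j(2) by (simp add: tangent_term_def)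
  then have "(\<Sum>i<n. tangent_term n (t i) i \<omega>) = (\<Sum>i\<in>{j}. tangent_term n (t i) i \<omega>)"
    using j(1) by (intro sum.mono_neutral_right) auto
  also have "\<dots> \<le> 1 / eff_conductance m (fst \<omega>) (snd \<omega>) n"
    using j tangent_le_inverse[OF eff_conductance_le_exit_energy[OF j] assms[OF j(1)]]
    by (simp add: tangent_term_def)
  finally show ?thesis by (simp add: eff_resistance_def)
next
  case False
  then show ?thesis by (simp add: tangent_term_def)
qed

lemma nn_integral_tangent_term_ge:
  assumes "j < n" "t \<ge> 0"
  shows "ennreal (2 * t * (pmf p 1 ^ j * (1 - pmf p 1)) - t\<^sup>2 * (e * pmf p 1 ^ j / ((real n - real j) * m ^ j)))
           \<le> (\<integral>\<^sup>+ \<omega>. tangent_term n t j \<omega> \<partial>gw)"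
proof -
  define V where "V = e * pmf p 1 ^ j / ((real n - real j) * m ^ j)"
  have V: "V \<ge> 0" using assms(1) e_nonneg m_pos by (simp add: V_def)
  have "ennreal (2 * t * (pmf p 1 ^ j * (1 - pmf p 1))) = ennreal (2 * t) * emeasure (offspring_space p) (spine_exit j)"
    using assms(2) pmf_le_1[of p 1] by (simp add: emeasure_spine_exit ennreal_mult ennreal_power)
  also have "\<dots> = (\<integral>\<^sup>+ \<omega>. ennreal (2 * t) * indicator (spine_exit j) (fst \<omega>) \<partial>gw)"
    using nn_integral_gw_product[of "indicator (spine_exit j)" "\<lambda>_. 1"]
    by (simp add: nn_integral_cmult prob_space.emeasure_space_1[OF prob_space_PiM[OF prob_space_Q]])
  also have "\<dots> \<le> (\<integral>\<^sup>+ \<omega>. tangent_term n t j \<omega> + ennreal (t\<^sup>2) * exit_energy n j \<omega> \<partial>gw)"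
    by (intro nn_integral_mono) (auto simp: tangent_term_def diff_add_self_ennreal not_le intro: less_imp_le)
  also have "\<dots> = (\<integral>\<^sup>+ \<omega>. tangent_term n t j \<omega> \<partial>gw) + ennreal (t\<^sup>2) * (\<integral>\<^sup>+ \<omega>. exit_energy n j \<omega> \<partial>gw)"
    by (simp add: nn_integral_add nn_integral_cmult)
  also have "\<dots> \<le> (\<integral>\<^sup>+ \<omega>. tangent_term n t j \<omega> \<partial>gw) + ennreal (t\<^sup>2) * ennreal V"
    unfolding V_def by (intro add_left_mono mult_left_mono nn_integral_exit_energy_le assms(1)) simp
  also have "ennreal (t\<^sup>2) * ennreal V = ennreal (t\<^sup>2 * V)"
    using V by (simp add: ennreal_mult)
  finally have "ennreal (2 * t * (pmf p 1 ^ j * (1 - pmf p 1)))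
      \<le> ennreal (t\<^sup>2 * V) + (\<integral>\<^sup>+ \<omega>. tangent_term n t j \<omega> \<partial>gw)"
    by (simp add: add.commute)
  then show ?thesis
    unfolding V_def[symmetric] using V by (simp add: ennreal_minus[symmetric] ennreal_minus_le_iff)
qed

lemma expected_exit_contribution_ge:
  assumes "j < n" "0 < pmf p 1" "e > 0" "pmf p 1 * m \<ge> 1"
  shows "ennreal ((1 - pmf p 1)\<^sup>2 / e * real (n - j))
           \<le> (\<integral>\<^sup>+ \<omega>. tangent_term n ((1 - pmf p 1) * (real n - real j) * m ^ j / e) j \<omega> \<partial>gw)"
proof -
  define q where "q = 1 - pmf p 1"
  define a where "a = real n - real j"
  define t where "t = q * a * m ^ j / e"
  have a: "a > 0" using assms(1) by (simp add: a_def)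
  have t: "t \<ge> 0" using a assms(3) pmf_le_1[of p 1] m_pos by (simp add: t_def q_def)
  have "(1 - pmf p 1)\<^sup>2 / e * real (n - j) = 1 * (q\<^sup>2 / e * a)"
    using assms(1) by (simp add: q_def a_def of_nat_diff)
  also have "\<dots> \<le> (pmf p 1 * m) ^ j * (q\<^sup>2 / e * a)"
    using assms a by (intro mult_right_mono one_le_power) auto
  also have "\<dots> = 2 * t * (pmf p 1 ^ j * q) - t\<^sup>2 * (e * pmf p 1 ^ j / (a * m ^ j))"
    using a assms(3) m_pos by (simp add: t_def power2_eq_square power_mult_distrib field_simps)
  finally show ?thesis
    using nn_integral_tangent_term_ge[OF assms(1) t] ennreal_leI order_trans
    unfolding t_def q_def a_def by blast
qed

lemma expected_resistance_ge:
  assumes "0 < pmf p 1" "e > 0" "pmf p 1 * m \<ge> 1"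
  shows "ennreal ((1 - pmf p 1)\<^sup>2 / (2 * e) * (real n)\<^sup>2)
           \<le> (\<integral>\<^sup>+ \<omega>. eff_resistance m (fst \<omega>) (snd \<omega>) n \<partial>gw)"
proof -
  define c where "c = (1 - pmf p 1)\<^sup>2 / e"
  define t where "t j = (1 - pmf p 1) * (real n - real j) * m ^ j / e" for j
  have t: "t j \<ge> 0" if "j < n" for j
    using that assms(2) pmf_le_1[of p 1] m_pos by (simp add: t_def)
  have c: "c \<ge> 0" using assms(2) by (simp add: c_def)
  have "(1 - pmf p 1)\<^sup>2 / (2 * e) * (real n)\<^sup>2 = c / 2 * (real n * real n)"
    by (simp add: c_def power2_eq_square)
  also have "\<dots> \<le> c / 2 * (real n * (real n + 1))"
    using c by (intro mult_left_mono) auto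
  also have "\<dots> = (\<Sum>j<n. c * real (n - j))"
    by (simp add: sum_distrib_left[symmetric] flip: sum_diff_lessThan_real)
  finally have "(1 - pmf p 1)\<^sup>2 / (2 * e) * (real n)\<^sup>2 \<le> (\<Sum>j<n. c * real (n - j))" .
  then have "ennreal ((1 - pmf p 1)\<^sup>2 / (2 * e) * (real n)\<^sup>2) \<le> ennreal (\<Sum>j<n. c * real (n - j))"
    by (rule ennreal_leI)
  also have "\<dots> = (\<Sum>j<n. ennreal (c * real (n - j)))"
    by (rule sum_ennreal[symmetric]) (use c in simp)
  also have "\<dots> \<le> (\<Sum>j<n. \<integral>\<^sup>+ \<omega>. tangent_term n (t j) j \<omega> \<partial>gw)"
    unfolding c_def t_def using assms by (intro sum_mono expected_exit_contribution_ge) auto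
  also have "\<dots> = (\<integral>\<^sup>+ \<omega>. (\<Sum>j<n. tangent_term n (t j) j \<omega>) \<partial>gw)"
    by (rule nn_integral_sum[symmetric]) simp
  also have "\<dots> \<le> (\<integral>\<^sup>+ \<omega>. eff_resistance m (fst \<omega>) (snd \<omega>) n \<partial>gw)"
    using t by (intro nn_integral_mono sum_tangent_terms_le_eff_resistance)
  finally show ?thesis .
qed

end

lemma liminf_divide_of_nat_eq_top:
  fixes f :: "nat \<Rightarrow> ennreal"
  assumes "c > 0" "\<And>n. ennreal (c * (real n)\<^sup>2) \<le> f n"
  shows "liminf (\<lambda>n. f n / of_nat n) = \<infinity>"
proof -
  have "ennreal (c * real n) \<le> f n / of_nat n" if "n \<ge> 1" for n
  proof -
    have "ennreal (c * real n) = ennreal (c * (real n)\<^sup>2) / ennreal (real n)"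
      using that assms(1) by (simp add: divide_ennreal power2_eq_square)
    also have "\<dots> \<le> f n / of_nat n"
      using assms(2) by (simp add: divide_right_mono_ennreal ennreal_of_nat_eq_real_of_nat)
    finally show ?thesis .
  qed
  then have "liminf (\<lambda>n. ennreal (c * real n)) \<le> liminf (\<lambda>n. f n / of_nat n)"
    by (intro Liminf_mono eventually_sequentiallyI)
  moreover have "((\<lambda>n. ennreal (c * real n)) \<longlongrightarrow> top) sequentially"
    unfolding ennreal_tendsto_top_eq_at_top
    by (rule filterlim_tendsto_pos_mult_at_top[OF tendsto_const assms(1) filterlim_real_sequentially])
  ultimately show ?thesis
    by (simp add: lim_imp_Liminf top_unique)
qed

lemma pmf_one_lt_one:
  assumes "integrable (measure_pmf p) real" "measure_pmf.expectation p real > 1"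
  shows "pmf p 1 < 1"
proof (rule ccontr)
  assume "\<not> pmf p 1 < 1"
  then have "AE k in measure_pmf p. k = 1"
    using pmf_le_1[of p 1] measure_pmf.AE_prob_1[of p "{1}"] by (simp add: measure_pmf_single)
  then have "measure_pmf.expectation p real = 1"
    by (simp add: integral_cong_AE[of real _ "\<lambda>_. 1"])
  with assms(2) show False by simp
qed

lemma nn_integral_inverse_eq_pos:
  assumes "prob_space Q" "sets Q = sets borel" "AE x in Q. x > 0"
    and "(\<integral>\<^sup>+ x. ennreal (1 / x) \<partial>Q) < \<infinity>"
  obtains e where "(\<integral>\<^sup>+ x. ennreal (1 / x) \<partial>Q) = ennreal e" "e > 0"
proof -
  have "(\<lambda>x. ennreal (1 / x)) \<in> borel_measurable Q"
    by (subst measurable_cong_sets[OF assms(2) refl]) measurable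
  moreover have "\<not> (AE x in Q. ennreal (1 / x) = 0)"
  proof
    assume "AE x in Q. ennreal (1 / x) = 0"
    with assms(3) have "AE x in Q. False" by eventually_elim simp
    with assms(1) show False by (simp add: prob_space.AE_False)
  qed
  ultimately have "(\<integral>\<^sup>+ x. ennreal (1 / x) \<partial>Q) \<noteq> 0"
    by (simp add: nn_integral_0_iff_AE)
  with assms(4) show ?thesis
    by (intro that[of "enn2real (\<integral>\<^sup>+ x. ennreal (1 / x) \<partial>Q)"])
       (auto simp: less_top enn2real_positive_iff zero_less_iff_neq_zero)
qed

theorem mainTheorem14:
  fixes p :: "nat pmf" and Q :: "real measure" and m :: real
  assumes p0: "pmf p 0 = 0"
    and mean_fin: "integrable (measure_pmf p) real"
    and m_def: "m = measure_pmf.expectation p real"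
    and m_gt: "m > 1"
    and Q_prob: "prob_space Q"
    and Q_borel: "sets Q = sets borel"
    and Q_pos: "AE x in Q. x > 0"
    and moments: "(\<integral>\<^sup>+ x. ennreal (x\<^sup>2 + 1 / x) \<partial>Q)
                    + (\<integral>\<^sup>+ k. ennreal (real k ^ 3) \<partial>measure_pmf p) < \<infinity>"
    and p1: "pmf p 1 * m \<ge> 1"
  shows "liminf (\<lambda>n. (\<integral>\<^sup>+ \<omega>. eff_resistance m (fst \<omega>) (snd \<omega>) n \<partial>gw_space p Q)
                       / of_nat n) = \<infinity>"
proof -
  have "(\<integral>\<^sup>+ x. ennreal (1 / x) \<partial>Q) \<le> (\<integral>\<^sup>+ x. ennreal (x\<^sup>2 + 1 / x) \<partial>Q)"
    by (rule nn_integral_mono) (simp add: ennreal_leI)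
  also have "\<dots> \<le> (\<integral>\<^sup>+ x. ennreal (x\<^sup>2 + 1 / x) \<partial>Q) + (\<integral>\<^sup>+ k. ennreal (real k ^ 3) \<partial>measure_pmf p)"
    by (rule add_increasing2[OF zero_le order_refl])
  also have "\<dots> < \<infinity>" by (rule moments)
  finally obtain e where e: "(\<integral>\<^sup>+ x. ennreal (1 / x) \<partial>Q) = ennreal e" "e > 0"
    using nn_integral_inverse_eq_pos[OF Q_prob Q_borel Q_pos] by blast
  interpret gw_model p Q m e
    using Q_prob Q_borel mean_fin m_def e less_trans[OF zero_less_one m_gt]
    by (simp add: gw_model_def less_imp_le)
  have p1_pos: "0 < pmf p 1" using p1 by (cases "pmf p 1 = 0") auto
  have "pmf p 1 < 1" using pmf_one_lt_one[OF mean_fin] m_gt m_def by simp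
  with e(2) have "(1 - pmf p 1)\<^sup>2 / (2 * e) > 0" by simp
  then show ?thesis
    unfolding gw_space_def
    by (rule liminf_divide_of_nat_eq_top[OF _ expected_resistance_ge[OF p1_pos e(2) p1]])
qed

end
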